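(* Let $n\ge 2$, $k\ge 1$, $I=\{0,\ldots,n-1\}$. Let $\tilde S_n(k)$ be the set of bijections $u$ of $\mathbb{Z}/kn\mathbb{Z}$ such that $u(j+n)=u(j)+n$ for all $j\in\mathbb{Z}/kn\mathbb{Z}$ and $\sum_{i=1}^n u(i)\equiv\binom{n+1}{2}\pmod{kn}$. Then: (1) $\tilde S_n(k)$ is well defined, i.e. it is a group under composition; (2) the map $\varphi:\tilde S_n\to\tilde S_n(k)$, $\varphi([a_1,\ldots,a_n])=[a_1\bmod kn,\ldots,a_n\bmod kn]$ (i.e. $\varphi(u)(j\bmod kn)=u(j)\bmod kn$), is a homomorphism, and $\tilde S_n(k)$ is isomorphic to the quotient $\tilde S_n/\ker\varphi$; (3) with $N=\ker\varphi$, $N\cap K_{\{i\}}=\{e\}$ for every $i\in I$, where $K_{\{i\}}=\langle\tilde s_j:j\in I,\ j\ne i\rangle$; (4) $|\tilde S_n(k)|=k^{n-1}\,n!$.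
   Context: $\tilde S_n$ is the group (under composition) of all bijections $u:\mathbb{Z}\to\mathbb{Z}$ with $u(j+n)=u(j)+n$ for all $j$ and $\sum_{i=1}^n u(i)=\binom{n+1}{2}$, written $u=[u(1),\ldots,u(n)]$. Its generators are $\tilde s_i=[1,\ldots,i-1,i+1,i,i+2,\ldots,n]$ for $1\le i\le n-1$ and $\tilde s_0=[0,2,\ldots,n-1,n+1]$. Elements of $\tilde S_n(k)$ are likewise written $[u(1),\ldots,u(n)]$. *)

theory Defs
  imports "HOL-Algebra.Algebra"
begin

definition affS :: "nat \<Rightarrow> (int \<Rightarrow> int) monoid" where
  "affS n = \<lparr> carrier = {u. bij u \<and> (\<forall>j. u (j + int n) = u j + int n)
                  \<and> (\<Sum>i=1..int n. u i) = int ((n + 1) choose 2)},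
             monoid.mult = (\<lambda>u v. u \<circ> v),
             one = id \<rparr>"

text \<open>An element of Z/knZ is represented by
its residue in {0..<kn}; a map of Z/knZ is represented by a function int => int
which factors through reduction mod kn and takes values in {0..<kn}
(the latter follows from bij_betw together with the factorisation).\<close>
definition affSk :: "nat \<Rightarrow> nat \<Rightarrow> (int \<Rightarrow> int) monoid" where
  "affSk n k = \<lparr> carrier = {u. (\<forall>x. u x = u (x mod int (k * n)))
                  \<and> bij_betw u {0..<int (k * n)} {0..<int (k * n)}
                  \<and> (\<forall>j. u (j + int n) = (u j + int n) mod int (k * n))
                  \<and> (\<Sum>i=1..int n. u i) mod int (k * n) = int ((n + 1) choose 2) mod int (k * n)},
             monoid.mult = (\<lambda>u v. u \<circ> v),
             one = (\<lambda>x. x mod int (k * n)) \<rparr>"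

definition phiRed :: "nat \<Rightarrow> nat \<Rightarrow> (int \<Rightarrow> int) \<Rightarrow> (int \<Rightarrow> int)" where
  "phiRed n k u = (\<lambda>x. u x mod int (k * n))"

text \<open>For 1 <= i <= n-1 this is
[1,..,i+1,i,..,n], and for i = 0 it is [0,2,...,n-1,n+1].\<close>
definition sgen :: "nat \<Rightarrow> nat \<Rightarrow> int \<Rightarrow> int" where
  "sgen n i = (\<lambda>x. if x mod int n = int i mod int n then x + 1
                   else if x mod int n = (int i + 1) mod int n then x - 1
                   else x)"

definition Kpar :: "nat \<Rightarrow> nat \<Rightarrow> (int \<Rightarrow> int) set" where
  "Kpar n i = generate (affS n) {sgen n j | j. j < n \<and> j \<noteq> i}"

end

(*
  An element of either group is determined by its window u(0), ..., u(n-1) of values: for the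
  affine group the window values have pairwise distinct residues mod n and the prescribed sum,
  and reduction mod kn preserves all defining conditions because n divides kn.  Conversely every
  window modulo kn lifts, after correcting one entry by a multiple of kn, to the window of an
  affine permutation.  So reduction is a surjective homomorphism, which makes S_n(k) a group and
  identifies it with the quotient by the kernel.

  The parabolic subgroup K_{i} maps each block {i+1+tn, ..., i+n+tn} of n consecutive integers
  onto itself, whereas a kernel element moves every integer by a multiple of kn >= n; hence only
  the identity lies in both.

  Finally, a window modulo kn amounts to a permutation of the residues mod n together with digits
  in {0, ..., k-1} whose sum is divisible by k, and there are n! k^(n-1) such data.
*)

theory Submission
  imports Defs "HOL-Combinatorics.Permutations" "HOL-Library.FuncSet"
begin

lemma (in group) surj_hom_imp_group:
  assumes "h \<in> hom G H" "h ` carrier G = carrier H" "h \<one> = \<one>\<^bsub>H\<^esub>"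
  shows "group H"
proof -
  have "monoid (H\<lparr>carrier := h ` carrier G, one := h \<one>\<rparr>)"
    using hom_imp_img_monoid[OF assms(1)] .
  then interpret H: monoid H using assms(2,3) by simp
  show ?thesis
  proof (rule H.group_l_invI)
    fix y assume "y \<in> carrier H"
    then obtain x where x: "x \<in> carrier G" "y = h x" using assms(2) by blast
    then have "h (inv x) \<otimes>\<^bsub>H\<^esub> y = \<one>\<^bsub>H\<^esub>"
      using assms(1,3) by (simp add: hom_mult[symmetric])
    moreover have "h (inv x) \<in> carrier H" using x(1) assms(2) by blast
    ultimately show "\<exists>z\<in>carrier H. z \<otimes>\<^bsub>H\<^esub> y = \<one>\<^bsub>H\<^esub>" by blast
  qed
qed

lemma eq_if_div_eq_if_dvd_diff:
  fixes a b N M :: int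
  assumes "a div N = b div N" "0 < N" "N \<le> M" "M dvd a - b"
  shows "a = b"
proof (rule ccontr)
  assume "a \<noteq> b"
  have "a - b = a mod N - b mod N"
  proof -
    have "N * (a div N) = N * (b div N)" using assms(1) by simp
    then show ?thesis using mod_mult_div_eq[of a N] mod_mult_div_eq[of b N] by linarith
  qed
  then have "\<bar>a - b\<bar> < N"
    using assms(2) pos_mod_bound[of N a] pos_mod_bound[of N b]
      pos_mod_sign[of N a] pos_mod_sign[of N b]
    by linarith
  moreover have "\<bar>M\<bar> \<le> \<bar>a - b\<bar>" using dvd_imp_le_int \<open>a \<noteq> b\<close> assms(4) by simp
  ultimately show False using assms(3) by simp
qed

lemma div_mem_atLeastLessThan:
  fixes x N K :: int
  assumes "N > 0" "x \<in> {0..<N * K}"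
  shows "x div N \<in> {0..<K}"
proof -
  have "N * (x div N) \<le> x"
    using mod_mult_div_eq[of x N] pos_mod_sign[of N x] assms(1) by linarith
  moreover have "N * K \<le> N * (x div N)" if "K \<le> x div N"
    using that assms(1) by (simp add: mult_left_mono)
  ultimately have "x div N < K" using assms(2) by force
  then show ?thesis using assms by (simp add: pos_imp_zdiv_nonneg_iff)
qed

lemma add_mult_mem_atLeastLessThan:
  fixes a b N K :: int
  assumes "a \<in> {0..<N}" "b \<in> {0..<K}"
  shows "a + N * b \<in> {0..<N * K}"
proof -
  have "N * b \<le> N * (K - 1)" using assms by (intro mult_left_mono) auto
  then show ?thesis using assms by (simp add: algebra_simps)
qed

lemma bij_betw_mod_if_covers:
  fixes g :: "int \<Rightarrow> int" and N :: int
  assumes "N > 0"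
    and "\<And>x. x \<in> A \<Longrightarrow> g x mod N = g (x mod N) mod N"
    and "{0..<N} \<subseteq> (\<lambda>x. g x mod N) ` A"
  shows "bij_betw (\<lambda>r. g r mod N) {0..<N} {0..<N}"
proof -
  have "(\<lambda>r. g r mod N) ` {0..<N} = {0..<N}"
  proof
    show "(\<lambda>r. g r mod N) ` {0..<N} \<subseteq> {0..<N}" using assms(1) by auto
    show "{0..<N} \<subseteq> (\<lambda>r. g r mod N) ` {0..<N}"
    proof
      fix y assume "y \<in> {0..<N}"
      then obtain x where "x \<in> A" "y = g (x mod N) mod N" using assms(2,3) by force
      moreover have "x mod N \<in> {0..<N}" using assms(1) by simp
      ultimately show "y \<in> (\<lambda>r. g r mod N) ` {0..<N}" by blast
    qed
  qed
  then show ?thesis by (simp add: bij_betw_def eq_card_imp_inj_on)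
qed

definition shift_equivariant :: "int \<Rightarrow> (int \<Rightarrow> int) \<Rightarrow> bool" where
  "shift_equivariant N u \<longleftrightarrow> (\<forall>j. u (j + N) = u j + N)"

lemma shift_equivariant_add_mult:
  assumes "shift_equivariant N u"
  shows "u (j + N * m) = u j + N * m"
proof (induction m rule: int_induct[where k = 0])
  case (step1 m)
  have "u (j + N * (m + 1)) = u ((j + N * m) + N)" by (simp add: algebra_simps)
  also have "\<dots> = u (j + N * m) + N" using assms unfolding shift_equivariant_def by blast
  finally show ?case using step1 by (simp add: algebra_simps)
next
  case (step2 m)
  have "u (j + N * m) = u ((j + N * (m - 1)) + N)" by (simp add: algebra_simps)
  also have "\<dots> = u (j + N * (m - 1)) + N" using assms unfolding shift_equivariant_def by blast
  finally show ?case using step2 by (simp add: algebra_simps)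
qed simp

lemma shift_equivariant_decompose:
  assumes "shift_equivariant N u"
  shows "u j = u (j mod N) + N * (j div N)"
  using shift_equivariant_add_mult[OF assms, of "j mod N" "j div N"] by simp

lemma shift_equivariant_mod:
  assumes "shift_equivariant N u" "N dvd M"
  shows "u x mod M = u (x mod M) mod M"
proof -
  obtain c where M: "M = N * c" using assms(2) by blast
  have "x = x mod M + N * (c * (x div M))" using M by (simp add: mult.assoc[symmetric])
  then have "u x = u (x mod M) + N * (c * (x div M))"
    using shift_equivariant_add_mult[OF assms(1)] by metis
  then show ?thesis using M by (simp add: mult.assoc[symmetric])
qed

lemma shift_equivariant_comp:
  "shift_equivariant N u \<Longrightarrow> shift_equivariant N v \<Longrightarrow> shift_equivariant N (u \<circ> v)"
  unfolding shift_equivariant_def by simp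

lemma shift_equivariant_inv:
  assumes "bij u" "shift_equivariant N u"
  shows "shift_equivariant N (inv_into UNIV u)"
  unfolding shift_equivariant_def
proof
  fix j
  have "u (inv_into UNIV u j + N) = j + N"
    using assms unfolding shift_equivariant_def by (simp add: bij_is_surj surj_f_inv_f)
  then show "inv_into UNIV u (j + N) = inv_into UNIV u j + N" by (metis assms(1) bij_is_inj inv_f_f)
qed

lemma bij_betw_mod_if_bij_shift_equivariant:
  assumes "bij u" "shift_equivariant N u" "N dvd M" "M > 0"
  shows "bij_betw (\<lambda>r. u r mod M) {0..<M} {0..<M}"
proof (rule bij_betw_mod_if_covers[where A = UNIV])
  show "u x mod M = u (x mod M) mod M" for x using shift_equivariant_mod[OF assms(2,3)] .
  show "{0..<M} \<subseteq> range (\<lambda>x. u x mod M)"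
  proof
    fix y :: int assume "y \<in> {0..<M}"
    then have "y = u (inv_into UNIV u y) mod M"
      using assms(1) by (simp add: bij_is_surj surj_f_inv_f)
    then show "y \<in> range (\<lambda>x. u x mod M)" by blast
  qed
qed (use assms(4) in simp)

lemma sum_one_to_N_shift_equivariant:
  assumes "shift_equivariant N u" "N \<ge> 1"
  shows "(\<Sum>i=1..N. u i) = (\<Sum>r\<in>{0..<N}. u r) + N"
proof -
  have "{1..N} = insert N {1..<N}" "{0..<N} = insert 0 {1..<N}" using assms(2) by auto
  moreover have "u N = u 0 + N" using assms(1) unfolding shift_equivariant_def by (metis add_0)
  ultimately show ?thesis by simp
qed

lemma sum_window_comp:
  assumes "bij v" "shift_equivariant N u" "shift_equivariant N v" "N > 0"
  shows "(\<Sum>r\<in>{0..<N}. u (v r))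
    = (\<Sum>r\<in>{0..<N}. u r) + (\<Sum>r\<in>{0..<N}. v r) - (\<Sum>r\<in>{0..<N}. r)"
proof -
  have v_res: "bij_betw (\<lambda>r. v r mod N) {0..<N} {0..<N}"
    using bij_betw_mod_if_bij_shift_equivariant[OF assms(1,3) _ assms(4)] by simp
  have "(\<Sum>r\<in>{0..<N}. u (v r)) = (\<Sum>r\<in>{0..<N}. u (v r mod N) + (v r - v r mod N))"
  proof (rule sum.cong)
    fix r
    show "u (v r) = u (v r mod N) + (v r - v r mod N)"
      by (subst shift_equivariant_decompose[OF assms(2)]) (simp add: minus_mod_eq_mult_div)
  qed simp
  also have "\<dots> = (\<Sum>r\<in>{0..<N}. u (v r mod N)) + (\<Sum>r\<in>{0..<N}. v r) - (\<Sum>r\<in>{0..<N}. v r mod N)"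
    by (simp add: sum.distrib sum_subtractf)
  also have "(\<Sum>r\<in>{0..<N}. u (v r mod N)) = (\<Sum>r\<in>{0..<N}. u r)"
    using sum.reindex_bij_betw[OF v_res, of u] by simp
  also have "(\<Sum>r\<in>{0..<N}. v r mod N) = (\<Sum>r\<in>{0..<N}. r)"
    using sum.reindex_bij_betw[OF v_res, of id] by simp
  finally show ?thesis .
qed

definition window_extension :: "int \<Rightarrow> (int \<Rightarrow> int) \<Rightarrow> int \<Rightarrow> int" where
  "window_extension N f = (\<lambda>x. f (x mod N) + N * (x div N))"

lemma window_extension_eq: "r \<in> {0..<N} \<Longrightarrow> window_extension N f r = f r"
  unfolding window_extension_def by simp

lemma window_extension_cong:
  assumes "N > 0" "\<And>r. r \<in> {0..<N} \<Longrightarrow> f r = g r"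
  shows "window_extension N f = window_extension N g"
  unfolding window_extension_def using assms by simp

lemma shift_equivariant_window_extension: "shift_equivariant N (window_extension N f)"
  unfolding shift_equivariant_def window_extension_def
  by (cases "N = 0") (simp_all add: distrib_left)

lemma bij_window_extension:
  assumes "N > 0" and res: "bij_betw (\<lambda>r. f r mod N) {0..<N} {0..<N}"
  shows "bij (window_extension N f)"
proof (rule bijI)
  show "inj (window_extension N f)"
  proof (rule injI)
    fix x y assume eq: "window_extension N f x = window_extension N f y"
    have res_eq: "window_extension N f z mod N = f (z mod N) mod N" for z
      unfolding window_extension_def by simp
    have "f (x mod N) mod N = f (y mod N) mod N" using res_eq[of x] res_eq[of y] eq by simp
    then have mod_eq: "x mod N = y mod N"
      using inj_onD[OF bij_betw_imp_inj_on[OF res], of "x mod N" "y mod N"] assms(1) by simp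
    then have "N * (x div N) = N * (y div N)" using eq unfolding window_extension_def by simp
    then show "x = y" using mod_eq mod_mult_div_eq[of x N] mod_mult_div_eq[of y N] by linarith
  qed
  have "y \<in> range (window_extension N f)" for y
  proof -
    have "y mod N \<in> (\<lambda>r. f r mod N) ` {0..<N}"
      using bij_betw_imp_surj_on[OF res] assms(1) by simp
    then obtain r where r: "r \<in> {0..<N}" "f r mod N = y mod N" by auto
    then have "N dvd y - f r" by (simp add: mod_eq_dvd_iff dvd_diff_commute)
    then obtain c where "y - f r = N * c" by (elim dvdE)
    then have "window_extension N f (r + N * c) = y"
      using r(1) assms(1) unfolding window_extension_def by simp
    then show ?thesis by (metis rangeI)
  qed
  then show "surj (window_extension N f)" by blast
qed

lemma sum_int_one_to_n: "(\<Sum>i=1..int n. i) = int ((n + 1) choose 2)"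
proof (induction n)
  case (Suc n)
  have "{1..int (Suc n)} = insert (int n + 1) {1..int n}" by auto
  then show ?case using Suc by (simp add: numeral_2_eq_2)
qed simp

lemma affS_carrier_iff:
  assumes "n \<ge> 1"
  shows "u \<in> carrier (affS n) \<longleftrightarrow>
    bij u \<and> shift_equivariant (int n) u \<and> (\<Sum>r\<in>{0..<int n}. u r) = (\<Sum>r\<in>{0..<int n}. r)"
proof -
  have "(\<Sum>i=1..int n. i) = (\<Sum>r\<in>{0..<int n}. r) + int n"
    using sum_one_to_N_shift_equivariant[of "int n" id] assms
    by (simp add: shift_equivariant_def)
  then have "shift_equivariant (int n) u \<Longrightarrow>
      (\<Sum>i=1..int n. u i) = int ((n + 1) choose 2) \<longleftrightarrow>
      (\<Sum>r\<in>{0..<int n}. u r) = (\<Sum>r\<in>{0..<int n}. r)"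
    using sum_one_to_N_shift_equivariant[of "int n" u] assms sum_int_one_to_n[of n] by simp
  then show ?thesis unfolding affS_def shift_equivariant_def by auto
qed

lemma inv_into_in_affS:
  assumes "n \<ge> 1" "u \<in> carrier (affS n)"
  shows "inv_into UNIV u \<in> carrier (affS n)"
proof -
  have n: "int n > 0" using assms(1) by simp
  note carrier_iff = affS_carrier_iff[OF assms(1)]
  have u: "bij u" "shift_equivariant (int n) u"
    "(\<Sum>r\<in>{0..<int n}. u r) = (\<Sum>r\<in>{0..<int n}. r)"
    using assms(2) unfolding carrier_iff by auto
  let ?v = "inv_into UNIV u"
  have v: "bij ?v" "shift_equivariant (int n) ?v"
    using u bij_imp_bij_inv shift_equivariant_inv by auto
  have "(\<Sum>r\<in>{0..<int n}. u (?v r)) = (\<Sum>r\<in>{0..<int n}. r)"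
    using u(1) by (simp add: bij_is_surj surj_f_inv_f)
  then have "(\<Sum>r\<in>{0..<int n}. ?v r) = (\<Sum>r\<in>{0..<int n}. r)"
    using sum_window_comp[OF v(1) u(2) v(2) n] u(3) by simp
  then show ?thesis unfolding carrier_iff using v by simp
qed

lemma group_affS:
  assumes "n \<ge> 1"
  shows "group (affS n)"
proof (rule groupI)
  fix u v assume "u \<in> carrier (affS n)" "v \<in> carrier (affS n)"
  then show "u \<otimes>\<^bsub>affS n\<^esub> v \<in> carrier (affS n)"
    using assms unfolding affS_carrier_iff[OF assms]
    by (auto simp: affS_def bij_comp shift_equivariant_comp sum_window_comp)
next
  fix u assume "u \<in> carrier (affS n)"
  moreover from this have "inv_into UNIV u \<otimes>\<^bsub>affS n\<^esub> u = \<one>\<^bsub>affS n\<^esub>"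
    using affS_carrier_iff[OF assms] by (simp add: affS_def bij_is_inj)
  ultimately show "\<exists>v\<in>carrier (affS n). v \<otimes>\<^bsub>affS n\<^esub> u = \<one>\<^bsub>affS n\<^esub>"
    using inv_into_in_affS[OF assms] by blast
qed (auto simp: affS_def sum_int_one_to_n comp_assoc)

lemma inv_affS:
  assumes "n \<ge> 1" "u \<in> carrier (affS n)"
  shows "inv\<^bsub>affS n\<^esub> u = inv_into UNIV u"
proof (rule group.inv_equality[OF group_affS[OF assms(1)]])
  show "inv_into UNIV u \<otimes>\<^bsub>affS n\<^esub> u = \<one>\<^bsub>affS n\<^esub>"
    using assms affS_carrier_iff by (simp add: affS_def bij_is_inj)
qed (use assms inv_into_in_affS in auto)

lemma affSk_carrierD:
  assumes "w \<in> carrier (affSk n k)"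
  shows "w x = w (x mod int (k * n))"
    and "bij_betw w {0..<int (k * n)} {0..<int (k * n)}"
    and "w (j + int n) = (w j + int n) mod int (k * n)"
    and "(\<Sum>i=1..int n. w i) mod int (k * n) = int ((n + 1) choose 2) mod int (k * n)"
  using assms unfolding affSk_def by auto

lemma phiRed_window_extension_cong:
  assumes "\<And>r. f r mod int (k * n) = g r mod int (k * n)"
  shows "phiRed n k (window_extension (int n) f) = phiRed n k (window_extension (int n) g)"
  unfolding phiRed_def window_extension_def
  by (metis (no_types, lifting) assms mod_add_left_eq)

context
  fixes n k :: nat
  assumes n_pos: "n \<ge> 1" and k_pos: "k \<ge> 1"
begin

lemma affSk_value_range:
  assumes "w \<in> carrier (affSk n k)"
  shows "w x \<in> {0..<int (k * n)}"
proof -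
  have "x mod int (k * n) \<in> {0..<int (k * n)}" using n_pos k_pos by simp
  then show ?thesis
    using affSk_carrierD(1,2)[OF assms] by (metis bij_betwE)
qed

lemma affSk_add_mult_nat:
  assumes "w \<in> carrier (affSk n k)"
  shows "w (x + int n * int q) = (w x + int n * int q) mod int (k * n)"
proof (induction q)
  case 0
  show ?case using affSk_value_range[OF assms, of x] by simp
next
  case (Suc q)
  have "w (x + int n * int (Suc q)) = w ((x + int n * int q) + int n)"
    by (simp add: algebra_simps)
  also have "\<dots> = (w (x + int n * int q) + int n) mod int (k * n)"
    by (rule affSk_carrierD(3)[OF assms])
  also have "\<dots> = (w x + int n * int (Suc q)) mod int (k * n)"
    using Suc by (simp add: mod_add_left_eq mod_add_right_eq algebra_simps)
  finally show ?case .
qed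

lemma affSk_decompose:
  assumes "w \<in> carrier (affSk n k)"
  shows "w x = (w (x mod int n) + int n * (x div int n)) mod int (k * n)"
proof -
  define y where "y = x mod int (k * n)"
  define q where "q = x div int (k * n)"
  have "0 \<le> y" using n_pos k_pos unfolding y_def by simp
  then have "0 \<le> y div int n" using n_pos by (simp add: pos_imp_zdiv_nonneg_iff)
  have "w (y mod int n + int n * int (nat (y div int n)))
      = (w (y mod int n) + int n * int (nat (y div int n))) mod int (k * n)"
    by (rule affSk_add_mult_nat[OF assms])
  then have w_y: "w y = (w (y mod int n) + int n * (y div int n)) mod int (k * n)"
    using \<open>0 \<le> y div int n\<close> by simp
  have x: "x = y + int n * (int k * q)"
    unfolding y_def q_def using mod_mult_div_eq[of x "int (k * n)"] by (simp add: algebra_simps)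
  then have "x mod int n = y mod int n" "x div int n = y div int n + int k * q"
    using n_pos by simp_all
  then have "(w (x mod int n) + int n * (x div int n)) mod int (k * n)
      = ((w (y mod int n) + int n * (y div int n)) + int (k * n) * q) mod int (k * n)"
    by (simp add: algebra_simps)
  also have "\<dots> = w y" using w_y by (simp only: mod_mult_self2)
  also have "\<dots> = w x" unfolding y_def by (rule affSk_carrierD(1)[OF assms, symmetric])
  finally show ?thesis ..
qed

lemma affSk_residues_bij:
  assumes "w \<in> carrier (affSk n k)"
  shows "bij_betw (\<lambda>r. w r mod int n) {0..<int n} {0..<int n}"
proof (rule bij_betw_mod_if_covers[where A = "{0..<int (k * n)}"])
  show "w x mod int n = w (x mod int n) mod int n" for x
    by (subst affSk_decompose[OF assms]) (simp add: mod_mod_cancel)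
  show "{0..<int n} \<subseteq> (\<lambda>x. w x mod int n) ` {0..<int (k * n)}"
  proof
    fix y assume y: "y \<in> {0..<int n}"
    have "int n \<le> int (k * n)" using k_pos by (intro of_nat_mono) simp
    then have "y \<in> {0..<int (k * n)}" using y by (meson atLeastLessThan_iff order_less_le_trans)
    then have "y \<in> w ` {0..<int (k * n)}"
      using bij_betw_imp_surj_on[OF affSk_carrierD(2)[OF assms]] by simp
    then obtain x where x: "x \<in> {0..<int (k * n)}" "y = w x" by blast
    then have "y = w x mod int n" using y by simp
    then show "y \<in> (\<lambda>x. w x mod int n) ` {0..<int (k * n)}" using x(1) by blast
  qed
qed (use n_pos in simp)

lemma phiRed_window_extension:
  assumes "w \<in> carrier (affSk n k)"
  shows "phiRed n k (window_extension (int n) w) = w"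
proof
  show "phiRed n k (window_extension (int n) w) x = w x" for x
    unfolding phiRed_def window_extension_def by (rule affSk_decompose[OF assms, symmetric])
qed

lemma affSk_window_sum:
  assumes "w \<in> carrier (affSk n k)"
  shows "(\<Sum>r\<in>{0..<int n}. w r) mod int (k * n) = (\<Sum>r\<in>{0..<int n}. r) mod int (k * n)"
proof -
  let ?u = "window_extension (int n) w"
  have u: "shift_equivariant (int n) ?u" by (rule shift_equivariant_window_extension)
  have "w i = ?u i mod int (k * n)" for i
    using fun_cong[OF phiRed_window_extension[OF assms], of i] unfolding phiRed_def by simp
  then have "(\<Sum>i=1..int n. w i) = (\<Sum>i=1..int n. ?u i mod int (k * n))"
    by (rule sum.cong[OF refl])
  then have "(\<Sum>i=1..int n. w i) mod int (k * n) = (\<Sum>i=1..int n. ?u i) mod int (k * n)"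
    by (simp add: mod_sum_eq)
  also have "(\<Sum>i=1..int n. ?u i) = (\<Sum>r\<in>{0..<int n}. ?u r) + int n"
    using sum_one_to_N_shift_equivariant[OF u] n_pos by simp
  also have "(\<Sum>r\<in>{0..<int n}. ?u r) = (\<Sum>r\<in>{0..<int n}. w r)"
    by (rule sum.cong) (simp_all add: window_extension_eq)
  finally have "((\<Sum>r\<in>{0..<int n}. w r) + int n) mod int (k * n)
      = ((\<Sum>r\<in>{0..<int n}. r) + int n) mod int (k * n)"
    using affSk_carrierD(4)[OF assms] sum_int_one_to_n[of n]
      sum_one_to_N_shift_equivariant[of "int n" id] n_pos
    by (simp add: shift_equivariant_def)
  then show ?thesis by (simp add: mod_eq_dvd_iff)
qed

lemma phiRed_in_affSk:
  assumes "bij u" "shift_equivariant (int n) u"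
    and "(\<Sum>r\<in>{0..<int n}. u r) mod int (k * n) = (\<Sum>r\<in>{0..<int n}. r) mod int (k * n)"
  shows "phiRed n k u \<in> carrier (affSk n k)"
proof -
  have dvd: "int n dvd int (k * n)" by simp
  have pos: "int (k * n) > 0" using n_pos k_pos by simp
  have "(\<Sum>i=1..int n. u i mod int (k * n)) mod int (k * n) = (\<Sum>i=1..int n. u i) mod int (k * n)"
    by (simp add: mod_sum_eq)
  also have "\<dots> = ((\<Sum>r\<in>{0..<int n}. u r) + int n) mod int (k * n)"
    using sum_one_to_N_shift_equivariant[OF assms(2)] n_pos by simp
  also have "\<dots> = ((\<Sum>r\<in>{0..<int n}. r) + int n) mod int (k * n)"
    using assms(3) by (metis mod_add_left_eq)
  also have "\<dots> = int ((n + 1) choose 2) mod int (k * n)"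
    using sum_int_one_to_n[of n] sum_one_to_N_shift_equivariant[of "int n" id] n_pos
    by (simp add: shift_equivariant_def)
  finally have sum: "(\<Sum>i=1..int n. u i mod int (k * n)) mod int (k * n)
      = int ((n + 1) choose 2) mod int (k * n)" .
  have "u (j + int n) mod int (k * n) = (u j mod int (k * n) + int n) mod int (k * n)" for j
    using assms(2) unfolding shift_equivariant_def by (simp add: mod_add_left_eq)
  then show ?thesis
    using shift_equivariant_mod[OF assms(2) dvd] sum
      bij_betw_mod_if_bij_shift_equivariant[OF assms(1,2) dvd pos]
    unfolding affSk_def phiRed_def by simp
qed

lemma phiRed_comp:
  assumes "shift_equivariant (int n) u"
  shows "phiRed n k (u \<circ> v) = phiRed n k u \<circ> phiRed n k v"
  unfolding phiRed_def comp_def using shift_equivariant_mod[OF assms, of "int (k * n)"] by simp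

lemma phiRed_hom: "phiRed n k \<in> hom (affS n) (affSk n k)"
proof (rule homI)
  fix u assume "u \<in> carrier (affS n)"
  then show "phiRed n k u \<in> carrier (affSk n k)"
    using affS_carrier_iff[OF n_pos] phiRed_in_affSk by simp
next
  fix u v assume "u \<in> carrier (affS n)"
  then show "phiRed n k (u \<otimes>\<^bsub>affS n\<^esub> v) = phiRed n k u \<otimes>\<^bsub>affSk n k\<^esub> phiRed n k v"
    using affS_carrier_iff[OF n_pos] phiRed_comp by (simp add: affS_def affSk_def)
qed

lemma affSk_lift:
  assumes w: "w \<in> carrier (affSk n k)"
  shows "\<exists>u\<in>carrier (affS n). phiRed n k u = w"
proof -
  (* w fixes the window sum only modulo kn; shifting u(0) by D makes it exact. *)
  define D where "D = (\<Sum>r\<in>{0..<int n}. r) - (\<Sum>r\<in>{0..<int n}. w r)"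
  define f where "f r = w r + (if r = 0 then D else 0)" for r
  define u where "u = window_extension (int n) f"
  have "int (k * n) dvd D"
    unfolding D_def using affSk_window_sum[OF w] by (simp add: mod_eq_dvd_iff dvd_diff_commute)
  then have f_mod: "f r mod int (k * n) = w r mod int (k * n)" for r unfolding f_def by auto
  have "f r mod int n = w r mod int n" for r
    using f_mod[of r] by (metis dvd_triv_right mod_mod_cancel of_nat_mult)
  then have "bij u"
    using bij_window_extension affSk_residues_bij[OF w] n_pos unfolding u_def by simp
  moreover have "shift_equivariant (int n) u"
    unfolding u_def by (rule shift_equivariant_window_extension)
  moreover have "(\<Sum>r\<in>{0..<int n}. u r) = (\<Sum>r\<in>{0..<int n}. r)"
  proof -
    have "(\<Sum>r\<in>{0..<int n}. u r) = (\<Sum>r\<in>{0..<int n}. f r)"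
      unfolding u_def by (rule sum.cong) (simp_all add: window_extension_eq)
    also have "\<dots> = (\<Sum>r\<in>{0..<int n}. w r) + D"
      unfolding f_def using n_pos by (simp add: sum.distrib)
    finally show ?thesis unfolding D_def by simp
  qed
  ultimately have "u \<in> carrier (affS n)" using affS_carrier_iff[OF n_pos] by simp
  moreover have "phiRed n k u = w"
    unfolding u_def phiRed_window_extension_cong[OF f_mod] by (rule phiRed_window_extension[OF w])
  ultimately show ?thesis by blast
qed

lemma phiRed_image: "phiRed n k ` carrier (affS n) = carrier (affSk n k)"
  using phiRed_hom affSk_lift by (fastforce simp: hom_def)

lemma group_affSk: "group (affSk n k)"
proof (rule group.surj_hom_imp_group[OF group_affS[OF n_pos] phiRed_hom phiRed_image])
  show "phiRed n k \<one>\<^bsub>affS n\<^esub> = \<one>\<^bsub>affSk n k\<^esub>" by (simp add: affS_def affSk_def phiRed_def)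
qed

lemma affS_Mod_kernel_iso_affSk:
  "affS n Mod kernel (affS n) (affSk n k) (phiRed n k) \<cong> affSk n k"
proof -
  have "group_hom (affS n) (affSk n k) (phiRed n k)"
    using group_affS[OF n_pos] group_affSk phiRed_hom
    by (simp add: group_hom_def group_hom_axioms_def)
  then show ?thesis using phiRed_image by (rule group_hom.FactGroup_iso)
qed

end

lemma generate_affS_preserves:
  assumes "u \<in> generate (affS n) S"
    and "n \<ge> 1" "S \<subseteq> carrier (affS n)" "\<And>s. s \<in> S \<Longrightarrow> g \<circ> s = g"
  shows "g \<circ> u = g"
  using assms(1)
proof (induction rule: generate.induct)
  case one
  show ?case by (simp add: affS_def)
next
  case (incl h)
  then show ?case by (rule assms(4))
next
  case (inv h)
  then have "bij h" "g \<circ> h = g" using assms(3,4) affS_carrier_iff[OF assms(2)] by auto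
  then have "g (inv_into UNIV h x) = g x" for x
    by (metis bij_is_surj comp_apply surj_f_inv_f)
  then show ?case using inv_affS[OF assms(2)] inv assms(3) by (auto simp: subset_iff)
next
  case (eng h1 h2)
  have "h1 \<otimes>\<^bsub>affS n\<^esub> h2 = h1 \<circ> h2" by (simp add: affS_def)
  then show ?case using eng.IH by (metis comp_assoc)
qed

lemma div_diff1_eq:
  fixes z N :: int
  assumes "N > 0" "z mod N \<noteq> 0"
  shows "(z - 1) div N = z div N"
proof (rule int_div_pos_eq)
  show "z - 1 = N * (z div N) + (z mod N - 1)" using mod_mult_div_eq[of z N] by simp
  show "0 \<le> z mod N - 1" "z mod N - 1 < N"
    using assms pos_mod_sign[of N z] pos_mod_bound[of N z] by linarith+
qed

lemma diff_mod_neq_0: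
  fixes i j n :: nat
  assumes "i < n" "j < n" "i \<noteq> j"
  shows "(int j - int i) mod int n \<noteq> 0"
proof
  assume "(int j - int i) mod int n = 0"
  then have "int n dvd int j - int i" by (simp add: dvd_eq_mod_eq_0)
  then have "int j mod int n = int i mod int n" by (simp add: mod_eq_dvd_iff)
  then show False using assms by simp
qed

lemma pred_mod_eq:
  fixes j n :: nat
  assumes "j < n" "x mod int n = (int j + 1) mod int n"
  shows "(x - 1) mod int n = int j"
proof -
  have "(x - 1) mod int n = (int j + 1 - 1) mod int n" using assms(2) by (metis mod_diff_left_eq)
  then show ?thesis using assms(1) by simp
qed

definition block :: "nat \<Rightarrow> nat \<Rightarrow> int \<Rightarrow> int" where
  "block n i x = (x - int i - 1) div int n"

context
  fixes n :: nat
  assumes n_ge2: "n \<ge> 2"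
begin

lemma sgen_eqs:
  assumes "j < n"
  shows "x mod int n = int j \<Longrightarrow> sgen n j x = x + 1"
    and "x mod int n = (int j + 1) mod int n \<Longrightarrow> sgen n j x = x - 1"
    and "x mod int n \<noteq> int j \<Longrightarrow> x mod int n \<noteq> (int j + 1) mod int n \<Longrightarrow> sgen n j x = x"
proof -
  have "(int j + 1) mod int n \<noteq> int j"
  proof
    assume "(int j + 1) mod int n = int j"
    then have "(int j + 1) mod int n = int j mod int n" using assms by simp
    then have "int n dvd 1" by (simp add: mod_eq_dvd_iff)
    then show False using n_ge2 by simp
  qed
  then show "x mod int n = int j \<Longrightarrow> sgen n j x = x + 1"
    and "x mod int n = (int j + 1) mod int n \<Longrightarrow> sgen n j x = x - 1"
    and "x mod int n \<noteq> int j \<Longrightarrow> x mod int n \<noteq> (int j + 1) mod int n \<Longrightarrow> sgen n j x = x"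
    using assms unfolding sgen_def by auto
qed

lemma sgen_involution:
  assumes "j < n"
  shows "sgen n j (sgen n j x) = x"
proof -
  consider "x mod int n = int j" | "x mod int n = (int j + 1) mod int n"
    | "x mod int n \<noteq> int j" "x mod int n \<noteq> (int j + 1) mod int n" by blast
  then show ?thesis
  proof cases
    case 1
    then have "(x + 1) mod int n = (int j + 1) mod int n" by (metis mod_add_left_eq)
    then show ?thesis using sgen_eqs[OF assms] 1 by simp
  next
    case 2
    then show ?thesis using sgen_eqs[OF assms] pred_mod_eq[OF assms] by simp
  next
    case 3
    then show ?thesis using sgen_eqs[OF assms] by simp
  qed
qed

lemma sgen_in_affS:
  assumes "j < n"
  shows "sgen n j \<in> carrier (affS n)"
proof -
  have "bij (sgen n j)" using sgen_involution[OF assms] by (metis bijI')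
  moreover have "shift_equivariant (int n) (sgen n j)"
    unfolding shift_equivariant_def sgen_def by simp
  moreover have "(\<Sum>r\<in>{0..<int n}. sgen n j r) = (\<Sum>r\<in>{0..<int n}. r)"
  proof -
    let ?a = "int j" and ?b = "(int j + 1) mod int n"
    have ab: "?a \<in> {0..<int n}" "?b \<in> {0..<int n}" using assms by auto
    have "sgen n j r = r + ((if r = ?a then 1 else 0) - (if r = ?b then 1 else 0))"
      if "r \<in> {0..<int n}" for r
      using that sgen_eqs[OF assms, of r] by auto
    then have "(\<Sum>r\<in>{0..<int n}. sgen n j r)
        = (\<Sum>r\<in>{0..<int n}. r) + ((\<Sum>r\<in>{0..<int n}. if r = ?a then 1 else 0)
          - (\<Sum>r\<in>{0..<int n}. if r = ?b then 1 else 0))"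
      by (simp add: sum.distrib sum_subtractf)
    also have "\<dots> = (\<Sum>r\<in>{0..<int n}. r)" using ab by simp
    finally show ?thesis .
  qed
  ultimately show ?thesis using affS_carrier_iff n_ge2 by simp
qed

lemma block_succ:
  assumes "(y - int i) mod int n \<noteq> 0"
  shows "block n i (y + 1) = block n i y"
  using div_diff1_eq[OF _ assms] n_ge2 unfolding block_def by simp

lemma block_sgen:
  assumes "i < n" "j < n" "i \<noteq> j"
  shows "block n i (sgen n j x) = block n i x"
proof -
  have ne: "(y - int i) mod int n \<noteq> 0" if "y mod int n = int j" for y
    using diff_mod_neq_0[OF assms(1,2,3)] that by (metis mod_diff_left_eq)
  consider "x mod int n = int j" | "x mod int n = (int j + 1) mod int n"
    | "x mod int n \<noteq> int j" "x mod int n \<noteq> (int j + 1) mod int n" by blast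
  then show ?thesis
  proof cases
    case 1
    then show ?thesis using sgen_eqs[OF assms(2)] block_succ[OF ne] by simp
  next
    case 2
    then have "(x - 1) mod int n = int j" by (rule pred_mod_eq[OF assms(2)])
    then show ?thesis using sgen_eqs[OF assms(2)] 2 block_succ[OF ne, of "x - 1"] by simp
  next
    case 3
    then show ?thesis using sgen_eqs[OF assms(2)] by simp
  qed
qed

lemma Kpar_preserves_block:
  assumes "i < n" "u \<in> Kpar n i"
  shows "block n i (u x) = block n i x"
proof -
  have "block n i \<circ> u = block n i"
    using assms(2) unfolding Kpar_def
  proof (rule generate_affS_preserves)
    show "{sgen n j |j. j < n \<and> j \<noteq> i} \<subseteq> carrier (affS n)" using sgen_in_affS by auto
    show "block n i \<circ> s = block n i" if "s \<in> {sgen n j |j. j < n \<and> j \<noteq> i}" for s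
      using that block_sgen[OF assms(1)] by auto
  qed (use n_ge2 in simp)
  then show ?thesis by (metis comp_apply)
qed

lemma kernel_phiRed_inter_Kpar:
  assumes "k \<ge> 1" "i < n"
  shows "kernel (affS n) (affSk n k) (phiRed n k) \<inter> Kpar n i = {\<one>\<^bsub>affS n\<^esub>}"
proof
  have "\<one>\<^bsub>affS n\<^esub> \<in> kernel (affS n) (affSk n k) (phiRed n k)"
    by (auto simp: kernel_def affS_def affSk_def phiRed_def sum_int_one_to_n)
  moreover have "\<one>\<^bsub>affS n\<^esub> \<in> Kpar n i" unfolding Kpar_def by (rule generate.one)
  ultimately show "{\<one>\<^bsub>affS n\<^esub>} \<subseteq> kernel (affS n) (affSk n k) (phiRed n k) \<inter> Kpar n i"
    by blast
next
  show "kernel (affS n) (affSk n k) (phiRed n k) \<inter> Kpar n i \<subseteq> {\<one>\<^bsub>affS n\<^esub>}"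
  proof
    fix u assume u: "u \<in> kernel (affS n) (affSk n k) (phiRed n k) \<inter> Kpar n i"
    have "u x - int i - 1 = x - int i - 1" for x
    proof (rule eq_if_div_eq_if_dvd_diff)
      show "(u x - int i - 1) div int n = (x - int i - 1) div int n"
        using Kpar_preserves_block[OF assms(2)] u unfolding block_def by blast
      have "phiRed n k u = (\<lambda>x. x mod int (k * n))"
        using u by (simp add: kernel_def affSk_def)
      then have "u x mod int (k * n) = x mod int (k * n)"
        unfolding phiRed_def by metis
      then show "int (k * n) dvd (u x - int i - 1) - (x - int i - 1)"
        by (simp add: mod_eq_dvd_iff)
      show "int n \<le> int (k * n)" using assms(1) by (intro of_nat_mono) simp
    qed (use n_ge2 in simp)
    then have "u = id" by auto
    then show "u \<in> {\<one>\<^bsub>affS n\<^esub>}" by (simp add: affS_def)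
  qed
qed

end

definition digit_vectors :: "nat \<Rightarrow> nat \<Rightarrow> (int \<Rightarrow> int) set" where
  "digit_vectors n k =
    {d \<in> {0..<int n} \<rightarrow>\<^sub>E {0..<int k}. int k dvd (\<Sum>r\<in>{0..<int n}. d r)}"

definition window_code :: "nat \<Rightarrow> (int \<Rightarrow> int) \<Rightarrow> (int \<Rightarrow> int) \<times> (int \<Rightarrow> int)" where
  "window_code n w =
    ((\<lambda>r. if r \<in> {0..<int n} then w r mod int n else r),
     restrict (\<lambda>r. w r div int n) {0..<int n})"

definition window_decode :: "nat \<Rightarrow> nat \<Rightarrow> (int \<Rightarrow> int) \<times> (int \<Rightarrow> int) \<Rightarrow> int \<Rightarrow> int" where
  "window_decode n k =
    (\<lambda>(p, d). phiRed n k (window_extension (int n) (\<lambda>r. p r + int n * d r)))"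

definition complete_digits :: "nat \<Rightarrow> nat \<Rightarrow> (int \<Rightarrow> int) \<Rightarrow> int \<Rightarrow> int" where
  "complete_digits n k e = e(int n - 1 := (- (\<Sum>i\<in>{0..<int n - 1}. e i)) mod int k)"

lemma window_split_last:
  "n \<ge> 1 \<Longrightarrow> {0..<int n} = insert (int n - 1) {0..<int n - 1}"
  "int n - 1 \<notin> {0..<int n - 1}"
  by auto

lemma complete_digits_restrict:
  assumes "n \<ge> 1" and d: "d \<in> digit_vectors n k"
  shows "complete_digits n k (restrict d {0..<int n - 1}) = d"
proof
  let ?I = "{0..<int n - 1}" and ?l = "int n - 1"
  note window = window_split_last(1)[OF assms(1)] window_split_last(2)[of n]
  have dvd: "int k dvd d ?l + (\<Sum>i\<in>?I. d i)" and "d ?l \<in> {0..<int k}"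
    using d window unfolding digit_vectors_def by auto
  then have "d ?l = d ?l mod int k" by simp
  also have "\<dots> = (- (\<Sum>i\<in>?I. d i)) mod int k"
    using dvd by (subst mod_eq_dvd_iff) simp
  finally have last: "d ?l = (- (\<Sum>i\<in>?I. d i)) mod int k" .
  fix x
  consider "x = ?l" | "x \<in> ?I" | "x \<notin> {0..<int n}" using window(1) by blast
  then show "complete_digits n k (restrict d ?I) x = d x"
  proof cases
    case 1
    then show ?thesis using last unfolding complete_digits_def by simp
  next
    case 2
    then show ?thesis using window(2) unfolding complete_digits_def by auto
  next
    case 3
    have "d \<in> extensional {0..<int n}"
      using d unfolding digit_vectors_def by (simp add: PiE_def)
    then have "d x = undefined" using 3 by (rule extensional_arb)
    then show ?thesis using 3 window(1) unfolding complete_digits_def by simp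
  qed
qed

lemma complete_digits_in:
  assumes "n \<ge> 1" "k \<ge> 1" and e: "e \<in> {0..<int n - 1} \<rightarrow>\<^sub>E {0..<int k}"
  shows "complete_digits n k e \<in> digit_vectors n k"
proof -
  let ?S = "\<Sum>i\<in>{0..<int n - 1}. e i"
  note window = window_split_last(1)[OF assms(1)] window_split_last(2)[of n]
  have sum: "(\<Sum>r\<in>{0..<int n}. complete_digits n k e r) = (- ?S) mod int k + ?S"
    using window unfolding complete_digits_def by simp
  have "((- ?S) mod int k + ?S) mod int k = 0"
    using mod_add_left_eq[of "- ?S" "int k" ?S] by simp
  then have "int k dvd (\<Sum>r\<in>{0..<int n}. complete_digits n k e r)"
    unfolding sum dvd_eq_mod_eq_0 .
  moreover have "complete_digits n k e \<in> {0..<int n} \<rightarrow>\<^sub>E {0..<int k}"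
    using e assms(2) window unfolding complete_digits_def by (auto simp: PiE_iff)
  ultimately show ?thesis unfolding digit_vectors_def by blast
qed

lemma card_digit_vectors:
  assumes "n \<ge> 1" "k \<ge> 1"
  shows "card (digit_vectors n k) = k ^ (n - 1)"
proof -
  let ?I = "{0..<int n - 1}"
  have "bij_betw (\<lambda>d. restrict d ?I) (digit_vectors n k) (?I \<rightarrow>\<^sub>E {0..<int k})"
  proof (rule bij_betw_byWitness[where f' = "complete_digits n k"])
    show "\<forall>d\<in>digit_vectors n k. complete_digits n k (restrict d ?I) = d"
      using complete_digits_restrict[OF assms(1)] by blast
    show "\<forall>e\<in>?I \<rightarrow>\<^sub>E {0..<int k}. restrict (complete_digits n k e) ?I = e"
    proof
      fix e assume e: "e \<in> ?I \<rightarrow>\<^sub>E {0..<int k}"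
      have "restrict (complete_digits n k e) ?I = restrict e ?I"
        unfolding complete_digits_def by (intro restrict_ext) auto
      also have "\<dots> = e" using e by (rule PiE_restrict)
      finally show "restrict (complete_digits n k e) ?I = e" .
    qed
    show "(\<lambda>d. restrict d ?I) ` digit_vectors n k \<subseteq> ?I \<rightarrow>\<^sub>E {0..<int k}"
      unfolding digit_vectors_def by auto
    show "complete_digits n k ` (?I \<rightarrow>\<^sub>E {0..<int k}) \<subseteq> digit_vectors n k"
      using complete_digits_in[OF assms] by blast
  qed
  then have "card (digit_vectors n k) = card (?I \<rightarrow>\<^sub>E {0..<int k})" by (rule bij_betw_same_card)
  also have "\<dots> = k ^ (n - 1)" using assms(1) by (simp add: card_funcsetE nat_diff_distrib)
  finally show ?thesis .
qed

context
  fixes n k :: nat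
  assumes n_pos: "n \<ge> 1" and k_pos: "k \<ge> 1"
begin

lemma window_code_in:
  assumes w: "w \<in> carrier (affSk n k)"
  shows "window_code n w \<in> {p. p permutes {0..<int n}} \<times> digit_vectors n k"
proof -
  let ?p = "\<lambda>r. if r \<in> {0..<int n} then w r mod int n else r"
  have "bij_betw ?p {0..<int n} {0..<int n}"
    using affSk_residues_bij[OF n_pos k_pos w] by (rule bij_betw_cong[THEN iffD1, rotated]) simp
  then have "?p permutes {0..<int n}" by (rule bij_imp_permutes) auto
  moreover have "w r div int n \<in> {0..<int k}" for r
  proof -
    have "w r \<in> {0..<int n * int k}"
      using affSk_value_range[OF n_pos k_pos w, of r] by (simp add: mult.commute)
    then show ?thesis using n_pos by (intro div_mem_atLeastLessThan) simp_all
  qed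
  moreover have "int k dvd (\<Sum>r\<in>{0..<int n}. w r div int n)"
  proof -
    have "(\<Sum>r\<in>{0..<int n}. w r mod int n) = (\<Sum>r\<in>{0..<int n}. r)"
      using sum.reindex_bij_betw[OF affSk_residues_bij[OF n_pos k_pos w], of id] by simp
    moreover have "(\<Sum>r\<in>{0..<int n}. w r)
        = (\<Sum>r\<in>{0..<int n}. w r mod int n) + (\<Sum>r\<in>{0..<int n}. int n * (w r div int n))"
      by (simp flip: sum.distrib)
    ultimately have "(\<Sum>r\<in>{0..<int n}. w r)
        = (\<Sum>r\<in>{0..<int n}. r) + int n * (\<Sum>r\<in>{0..<int n}. w r div int n)"
      by (simp add: sum_distrib_left)
    then have "int n * int k dvd int n * (\<Sum>r\<in>{0..<int n}. w r div int n)"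
      using affSk_window_sum[OF n_pos k_pos w] by (simp add: mod_eq_dvd_iff mult.commute)
    then show ?thesis using n_pos by simp
  qed
  ultimately show ?thesis unfolding window_code_def digit_vectors_def by auto
qed

lemma window_decode_in:
  assumes p: "p permutes {0..<int n}" and d: "d \<in> digit_vectors n k"
  shows "window_decode n k (p, d) \<in> carrier (affSk n k)"
proof -
  define f where "f r = p r + int n * d r" for r
  have p_in: "p r \<in> {0..<int n}" if "r \<in> {0..<int n}" for r
    using that permutes_in_image[OF p] by blast
  have f_mod: "f r mod int n = p r" if "r \<in> {0..<int n}" for r
    using p_in[OF that] by (simp add: f_def)
  have "bij_betw (\<lambda>r. f r mod int n) {0..<int n} {0..<int n}"
    using permutes_imp_bij[OF p] by (rule bij_betw_cong[THEN iffD1, rotated]) (simp add: f_mod)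
  then have "bij (window_extension (int n) f)" using n_pos by (intro bij_window_extension) simp_all
  moreover have "shift_equivariant (int n) (window_extension (int n) f)"
    by (rule shift_equivariant_window_extension)
  moreover have "(\<Sum>r\<in>{0..<int n}. window_extension (int n) f r) mod int (k * n)
      = (\<Sum>r\<in>{0..<int n}. r) mod int (k * n)"
  proof -
    obtain c where c: "(\<Sum>r\<in>{0..<int n}. d r) = int k * c"
      using d unfolding digit_vectors_def by blast
    have "(\<Sum>r\<in>{0..<int n}. window_extension (int n) f r) = (\<Sum>r\<in>{0..<int n}. f r)"
      by (rule sum.cong) (simp_all add: window_extension_eq)
    also have "\<dots> = (\<Sum>r\<in>{0..<int n}. p r) + int (k * n) * c"
      unfolding f_def using c by (simp add: sum.distrib sum_distrib_left[symmetric] algebra_simps)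
    also have "(\<Sum>r\<in>{0..<int n}. p r) = (\<Sum>r\<in>{0..<int n}. r)"
      using sum.reindex_bij_betw[OF permutes_imp_bij[OF p], of id] by simp
    finally show ?thesis by simp
  qed
  ultimately show ?thesis
    unfolding window_decode_def f_def by (simp add: phiRed_in_affSk[OF n_pos k_pos])
qed

lemma window_decode_code:
  assumes w: "w \<in> carrier (affSk n k)"
  shows "window_decode n k (window_code n w) = w"
proof -
  have "window_extension (int n)
      (\<lambda>r. (if r \<in> {0..<int n} then w r mod int n else r)
        + int n * restrict (\<lambda>r. w r div int n) {0..<int n} r)
    = window_extension (int n) w"
    using n_pos by (intro window_extension_cong) simp_all
  then show ?thesis
    unfolding window_decode_def window_code_def
    using phiRed_window_extension[OF n_pos k_pos w] by simp
qed

lemma window_code_decode: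
  assumes p: "p permutes {0..<int n}" and d: "d \<in> digit_vectors n k"
  shows "window_code n (window_decode n k (p, d)) = (p, d)"
proof -
  let ?w = "window_decode n k (p, d)"
  have p_in: "p r \<in> {0..<int n}" if "r \<in> {0..<int n}" for r
    using that permutes_in_image[OF p] by blast
  have d_in: "d r \<in> {0..<int k}" if "r \<in> {0..<int n}" for r
    using that d unfolding digit_vectors_def by blast
  have "?w r = p r + int n * d r" if r: "r \<in> {0..<int n}" for r
  proof -
    have "p r + int n * d r \<in> {0..<int (k * n)}"
      using add_mult_mem_atLeastLessThan[OF p_in[OF r] d_in[OF r]] by (simp add: mult.commute)
    then show ?thesis
      using r unfolding window_decode_def phiRed_def by (simp add: window_extension_eq)
  qed
  then have w_mod: "?w r mod int n = p r" and w_div: "?w r div int n = d r"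
    if "r \<in> {0..<int n}" for r
    using that p_in[OF that] d_in[OF that] by auto
  have "(\<lambda>r. if r \<in> {0..<int n} then ?w r mod int n else r) = p"
    using w_mod permutes_not_in[OF p] by auto
  moreover have "restrict (\<lambda>r. ?w r div int n) {0..<int n} = restrict d {0..<int n}"
    using w_div by (rule restrict_ext)
  moreover have "restrict d {0..<int n} = d"
    using d unfolding digit_vectors_def by (blast intro: PiE_restrict)
  ultimately show ?thesis unfolding window_code_def by simp
qed

lemma card_affSk: "card (carrier (affSk n k)) = k ^ (n - 1) * fact n"
proof -
  let ?P = "{p. p permutes {0..<int n}}"
  have "bij_betw (window_code n) (carrier (affSk n k)) (?P \<times> digit_vectors n k)"
  proof (rule bij_betw_byWitness[where f' = "window_decode n k"])
    show "\<forall>w\<in>carrier (affSk n k). window_decode n k (window_code n w) = w"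
      using window_decode_code by blast
    show "\<forall>pd\<in>?P \<times> digit_vectors n k. window_code n (window_decode n k pd) = pd"
      using window_code_decode by auto
    show "window_code n ` carrier (affSk n k) \<subseteq> ?P \<times> digit_vectors n k"
      using window_code_in by blast
    show "window_decode n k ` (?P \<times> digit_vectors n k) \<subseteq> carrier (affSk n k)"
      using window_decode_in by auto
  qed
  then have "card (carrier (affSk n k)) = card ?P * card (digit_vectors n k)"
    by (simp add: bij_betw_same_card card_cartesian_product)
  also have "card ?P = fact n" by (rule card_permutations) simp_all
  finally show ?thesis using card_digit_vectors[OF n_pos k_pos] by simp
qed

end

theorem mainTheorem6:
  fixes n k :: nat
  assumes "n \<ge> 2" and "k \<ge> 1"
  shows "group (affSk n k)
    \<and> phiRed n k \<in> hom (affS n) (affSk n k)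
    \<and> (affS n) Mod (kernel (affS n) (affSk n k) (phiRed n k)) \<cong> affSk n k
    \<and> (\<forall>i<n. kernel (affS n) (affSk n k) (phiRed n k) \<inter> Kpar n i = {\<one>\<^bsub>affS n\<^esub>})
    \<and> card (carrier (affSk n k)) = k ^ (n - 1) * fact n"
proof -
  have n: "n \<ge> 1" using assms(1) by simp
  show ?thesis
    using group_affSk[OF n assms(2)] phiRed_hom[OF n assms(2)]
      affS_Mod_kernel_iso_affSk[OF n assms(2)] kernel_phiRed_inter_Kpar[OF assms]
      card_affSk[OF n assms(2)]
    by blast
qed

end
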